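(* Let $\nu_n,\nu\in\Delta(V)$ with $\nu_n\to\nu$ weakly, and let $p_n,p\in V$ with $p_n\to p$. Then $\pi(c,\nu,p)\ge\limsup_{n\to\infty}\pi(c,\nu_n,p_n)$.
   Context: $V\subset\mathbb{R}$ is compact and $c:V\to\mathbb{R}$ is continuous with $v-c(v)\ge0$ on $V$. $\Delta(V)$ denotes Borel probability measures on $V$. For $\nu\in\Delta(V)$ and $p\in V$, $\pi(c,\nu,p)=\int_{\{v\ge p\}}(p-c(v))\nu(dv)$. *)

theory Defs
  imports "HOL-Probability.Probability"
begin

definition prob_on :: "real set \<Rightarrow> real measure \<Rightarrow> bool" where
  "prob_on V M \<longleftrightarrow> prob_space M \<and> sets M = sets (restrict_space borel V)"

definition weak_conv_on :: "real set \<Rightarrow> (nat \<Rightarrow> real measure) \<Rightarrow> real measure \<Rightarrow> bool" where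
  "weak_conv_on V Ms M \<longleftrightarrow>
     (\<forall>f::real \<Rightarrow> real. continuous_on V f \<longrightarrow>
        (\<lambda>n. integral\<^sup>L (Ms n) f) \<longlonglongrightarrow> integral\<^sup>L M f)"

definition profit :: "(real \<Rightarrow> real) \<Rightarrow> real measure \<Rightarrow> real \<Rightarrow> real" where
  "profit c \<nu> p = (LINT v:{v. p \<le> v}|\<nu>. p - c v)"

end

(*
  The integrand 1{v >= q} (q - c v) jumps at v = q, so bound it from above by the continuous
  function ramp p k v * (p - c v) + eps, where the ramp is 1 on [p - 1/k, oo) and 0 on
  (-oo, p - 2/k]. This is a valid bound once q is close enough to p, because on the small
  interval where the ramp and the indicator differ the margin p - c v is at least -eps: this is
  where c p <= p and the continuity of c enter. Weak convergence carries the integral of the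
  continuous bound to the limit, and as k grows the ramp decreases to the indicator of
  {v >= p}, so dominated convergence yields profit c nu p + eps.
*)
theory Submission
  imports Defs
begin

lemma space_prob_on: "prob_on V M \<Longrightarrow> space M = V"
  unfolding prob_on_def
  by (metis sets_eq_imp_space_eq space_borel space_restrict_space Int_UNIV_right)

lemma measurable_prob_on:
  "prob_on V M \<Longrightarrow> f \<in> borel_measurable (restrict_space borel V) \<Longrightarrow> f \<in> borel_measurable M"
  unfolding prob_on_def by (metis measurable_cong_sets)

lemma integrable_prob_on_bounded:
  fixes f :: "real \<Rightarrow> real"
  assumes M: "prob_on V M" and f: "f \<in> borel_measurable (restrict_space borel V)"
    and B: "\<And>v. v \<in> V \<Longrightarrow> \<bar>f v\<bar> \<le> B"
  shows "integrable M f"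
proof -
  interpret prob_space M using M unfolding prob_on_def by simp
  show ?thesis
    using B space_prob_on[OF M] measurable_prob_on[OF M f]
    by (intro integrable_const_bound[where B = B]) auto
qed

lemma bounded_continuous_on_compact:
  fixes f :: "real \<Rightarrow> real"
  assumes "compact V" "continuous_on V f"
  obtains B where "\<And>v. v \<in> V \<Longrightarrow> \<bar>f v\<bar> \<le> B"
proof -
  have "bounded (f ` V)"
    by (intro compact_imp_bounded compact_continuous_image assms)
  then show thesis using that by (auto simp: bounded_iff)
qed

lemma integrable_prob_on_continuous:
  fixes f :: "real \<Rightarrow> real"
  assumes "prob_on V M" "compact V" "continuous_on V f"
  shows "integrable M f"
proof -
  obtain B where "\<And>v. v \<in> V \<Longrightarrow> \<bar>f v\<bar> \<le> B"
    using bounded_continuous_on_compact[OF assms(2,3)] by blast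
  then show ?thesis
    by (rule integrable_prob_on_bounded[OF assms(1)
          borel_measurable_continuous_on_restrict[OF assms(3)]])
qed

lemma profit_eq_integral:
  "profit c M q = (\<integral>v. indicator {v. q \<le> v} v * (q - c v) \<partial>M)"
  unfolding profit_def set_lebesgue_integral_def by simp

lemma integrable_profit_integrand:
  assumes M: "prob_on V M" and "compact V" and c: "continuous_on V c"
  shows "integrable M (\<lambda>v. indicator {v. q \<le> v} v * (q - c v))"
proof -
  have cont: "continuous_on V (\<lambda>v. q - c v)"
    by (intro continuous_intros c)
  obtain B where B: "\<And>v. v \<in> V \<Longrightarrow> \<bar>q - c v\<bar> \<le> B"
    using bounded_continuous_on_compact[OF \<open>compact V\<close> cont] by blast
  have "(\<lambda>v. indicator {v. q \<le> v} v :: real) \<in> borel_measurable (restrict_space borel V)"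
    by (intro measurable_restrict_space1) measurable
  moreover have "(\<lambda>v. q - c v) \<in> borel_measurable (restrict_space borel V)"
    by (rule borel_measurable_continuous_on_restrict[OF cont])
  ultimately show ?thesis
    using B by (intro integrable_prob_on_bounded[OF M, where B = B])
      (auto simp: indicator_def intro: order_trans[OF abs_ge_zero])
qed

definition ramp :: "real \<Rightarrow> nat \<Rightarrow> real \<Rightarrow> real" where
  "ramp p k v = max 0 (min 1 (real k * (v - p) + 2))"

lemma ramp_bounds [simp]: "0 \<le> ramp p k v" "ramp p k v \<le> 1"
  unfolding ramp_def by auto

lemma ramp_eq_one: "real k * (p - v) \<le> 1 \<Longrightarrow> ramp p k v = 1"
  unfolding ramp_def by (simp add: algebra_simps)

lemma ramp_eq_zero: "2 \<le> real k * (p - v) \<Longrightarrow> ramp p k v = 0"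
  unfolding ramp_def by (simp add: algebra_simps)

lemma abs_ramp_mult_le: "\<bar>ramp p k v * x\<bar> \<le> \<bar>x\<bar>"
  by (simp add: abs_mult mult_left_le_one_le)

lemma continuous_on_ramp: "continuous_on A (ramp p k)"
  unfolding ramp_def by (intro continuous_intros)

lemma eventually_less_real_mult:
  assumes "0 < d"
  shows "eventually (\<lambda>k. a < real k * d) sequentially"
proof -
  have "filterlim (\<lambda>k. real k * d) at_top sequentially"
    using assms
    by (intro filterlim_at_top_mult_tendsto_pos[OF tendsto_const] filterlim_real_sequentially)
  then show ?thesis
    by (simp add: filterlim_at_top_dense)
qed

lemma tendsto_ramp_indicator: "(\<lambda>k. ramp p k v) \<longlonglongrightarrow> indicator {v. p \<le> v} v"
proof (cases "p \<le> v")
  case True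
  then have "ramp p k v = 1" for k
    by (intro ramp_eq_one order_trans[OF mult_nonneg_nonpos]) auto
  then show ?thesis using True by simp
next
  case False
  then have "eventually (\<lambda>k. 2 < real k * (p - v)) sequentially"
    by (intro eventually_less_real_mult) simp
  then have "eventually (\<lambda>k. ramp p k v = 0) sequentially"
    by (rule eventually_mono) (simp add: ramp_eq_zero)
  then show ?thesis
    using False by (simp add: tendsto_eventually)
qed

lemma eventually_margin_ge_near:
  assumes c: "continuous_on V c" and "p \<in> V" "c p \<le> p" "0 < \<epsilon>"
  shows "eventually (\<lambda>k. \<forall>v\<in>V. real k * \<bar>v - p\<bar> < 2 \<longrightarrow> -\<epsilon> \<le> p - c v) sequentially"
proof -
  obtain d where "0 < d" and d: "\<And>v. v \<in> V \<Longrightarrow> \<bar>v - p\<bar> < d \<Longrightarrow> \<bar>c v - c p\<bar> < \<epsilon>"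
    using assms unfolding continuous_on_iff dist_real_def by blast
  show ?thesis
    using eventually_less_real_mult[OF \<open>0 < d\<close>, of 2]
  proof eventually_elim
    case (elim k)
    show ?case
    proof (intro ballI impI)
      fix v
      assume "v \<in> V" "real k * \<bar>v - p\<bar> < 2"
      then have "\<bar>v - p\<bar> < d"
        using elim by (smt (verit, best) mult_left_mono of_nat_0_le_iff)
      then show "- \<epsilon> \<le> p - c v"
        using d[OF \<open>v \<in> V\<close>] \<open>c p \<le> p\<close> by linarith
    qed
  qed
qed

lemma profit_integrand_le_ramp:
  assumes close: "real k * \<bar>q - p\<bar> < 1" "\<bar>q - p\<bar> \<le> \<epsilon>"
    and near: "real k * \<bar>v - p\<bar> < 2 \<Longrightarrow> -\<epsilon> \<le> p - c v"
  shows "indicator {v. q \<le> v} v * (q - c v) \<le> ramp p k v * (p - c v) + \<epsilon>"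
proof (cases "q \<le> v")
  case True
  have "real k * (p - v) \<le> real k * \<bar>q - p\<bar>"
    using True by (intro mult_left_mono) auto
  then have "ramp p k v = 1"
    using close(1) by (intro ramp_eq_one) linarith
  then show ?thesis
    using True close(2) by simp
next
  case False
  have "- \<epsilon> \<le> ramp p k v * (p - c v)"
  proof (cases "2 \<le> real k * (p - v)")
    case True
    then show ?thesis
      using ramp_eq_zero[OF True] close(2) by simp
  next
    case far: False
    have "real k * (v - p) \<le> real k * \<bar>q - p\<bar>"
      using False by (intro mult_left_mono) auto
    then have "real k * \<bar>v - p\<bar> < 2"
      using far close(1) by (auto simp: abs_if)
    then have "ramp p k v * (- \<epsilon>) \<le> ramp p k v * (p - c v)"
      using near by (intro mult_left_mono) auto
    moreover have "ramp p k v * \<epsilon> \<le> \<epsilon>"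
      using close(2) by (intro mult_left_le_one_le) auto
    ultimately show ?thesis
      by simp
  qed
  then show ?thesis
    using False by simp
qed

lemma limsup_profit_le_ramp_integral:
  assumes "compact V" and c: "continuous_on V c" and \<nu>s: "\<forall>n. prob_on V (\<nu>s n)"
    and weak: "weak_conv_on V \<nu>s \<nu>" and ps: "ps \<longlonglongrightarrow> p" and "0 < \<epsilon>"
    and near: "\<And>v. v \<in> V \<Longrightarrow> real k * \<bar>v - p\<bar> < 2 \<Longrightarrow> -\<epsilon> \<le> p - c v"
  shows "limsup (\<lambda>n. ereal (profit c (\<nu>s n) (ps n)))
    \<le> ereal ((\<integral>v. ramp p k v * (p - c v) \<partial>\<nu>) + \<epsilon>)"
proof -
  define F where "F = (\<lambda>v. ramp p k v * (p - c v))"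
  have F_cont: "continuous_on V F"
    unfolding F_def by (intro continuous_intros continuous_on_ramp c)
  have dist: "(\<lambda>n. \<bar>ps n - p\<bar>) \<longlonglongrightarrow> 0"
    using ps by (intro tendsto_rabs_zero) (simp add: LIM_zero)
  have "eventually (\<lambda>n. real k * \<bar>ps n - p\<bar> < 1) sequentially"
    by (rule order_tendstoD(2)[OF tendsto_mult_right_zero[OF dist] zero_less_one])
  moreover have "eventually (\<lambda>n. \<bar>ps n - p\<bar> < \<epsilon>) sequentially"
    by (rule order_tendstoD(2)[OF dist \<open>0 < \<epsilon>\<close>])
  ultimately have "eventually (\<lambda>n.
      ereal (profit c (\<nu>s n) (ps n)) \<le> ereal (integral\<^sup>L (\<nu>s n) F + \<epsilon>)) sequentially"
  proof eventually_elim
    case (elim n)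
    have M: "prob_on V (\<nu>s n)"
      using \<nu>s by blast
    interpret prob_space "\<nu>s n"
      using M unfolding prob_on_def by simp
    have F_int: "integrable (\<nu>s n) F"
      by (rule integrable_prob_on_continuous[OF M \<open>compact V\<close> F_cont])
    have "profit c (\<nu>s n) (ps n) = (\<integral>v. indicator {v. ps n \<le> v} v * (ps n - c v) \<partial>\<nu>s n)"
      by (rule profit_eq_integral)
    also have "\<dots> \<le> (\<integral>v. F v + \<epsilon> \<partial>\<nu>s n)"
      using elim less_imp_le near space_prob_on[OF M] F_int
      by (intro integral_mono integrable_profit_integrand[OF M \<open>compact V\<close> c]
          Bochner_Integration.integrable_add integrable_const)
        (auto simp: F_def intro!: profit_integrand_le_ramp)
    also have "\<dots> = integral\<^sup>L (\<nu>s n) F + \<epsilon>"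
      using F_int by (simp add: prob_space)
    finally show ?case
      by simp
  qed
  then have "limsup (\<lambda>n. ereal (profit c (\<nu>s n) (ps n)))
      \<le> limsup (\<lambda>n. ereal (integral\<^sup>L (\<nu>s n) F + \<epsilon>))"
    by (rule Limsup_mono)
  also have "\<dots> = ereal (integral\<^sup>L \<nu> F + \<epsilon>)"
    using weak F_cont unfolding weak_conv_on_def
    by (intro lim_imp_Limsup) (auto intro!: tendsto_intros)
  finally show ?thesis
    unfolding F_def .
qed

lemma ramp_integral_tendsto_profit:
  assumes \<nu>: "prob_on V \<nu>" and "compact V" and c: "continuous_on V c"
  shows "(\<lambda>k. \<integral>v. ramp p k v * (p - c v) \<partial>\<nu>) \<longlonglongrightarrow> profit c \<nu> p"
proof -
  have cont: "continuous_on V (\<lambda>v. p - c v)"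
    by (intro continuous_intros c)
  obtain B where B: "\<And>v. v \<in> V \<Longrightarrow> \<bar>p - c v\<bar> \<le> B"
    using bounded_continuous_on_compact[OF \<open>compact V\<close> cont] by blast
  show ?thesis
    unfolding profit_eq_integral
  proof (rule integral_dominated_convergence[where w = "\<lambda>_. B"])
    show "integrable \<nu> (\<lambda>_. B)"
      using \<nu> unfolding prob_on_def
      by (simp add: prob_space.finite_measure finite_measure.integrable_const)
    show "AE v in \<nu>. norm (ramp p k v * (p - c v)) \<le> B" for k
      using B space_prob_on[OF \<nu>]
      by (intro AE_I2) (auto intro: order_trans[OF abs_ramp_mult_le])
    show "(\<lambda>v. ramp p k v * (p - c v)) \<in> borel_measurable \<nu>" for k
      by (intro measurable_prob_on[OF \<nu>] borel_measurable_continuous_on_restrict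
          continuous_intros continuous_on_ramp c)
    show "(\<lambda>v. indicator {v. p \<le> v} v * (p - c v)) \<in> borel_measurable \<nu>"
      using integrable_profit_integrand[OF assms] by auto
    show "AE v in \<nu>. (\<lambda>k. ramp p k v * (p - c v)) \<longlonglongrightarrow> indicator {v. p \<le> v} v * (p - c v)"
      by (intro AE_I2 tendsto_intros tendsto_ramp_indicator)
  qed
qed

theorem lemmaI3:
  fixes V :: "real set" and c :: "real \<Rightarrow> real"
    and \<nu>s :: "nat \<Rightarrow> real measure" and \<nu> :: "real measure"
    and ps :: "nat \<Rightarrow> real" and p :: real
  assumes "compact V"
    and "continuous_on V c"
    and "\<forall>v\<in>V. v - c v \<ge> 0"
    and "\<forall>n. prob_on V (\<nu>s n)"
    and "prob_on V \<nu>"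
    and "weak_conv_on V \<nu>s \<nu>"
    and "\<forall>n. ps n \<in> V" and "p \<in> V"
    and "ps \<longlonglongrightarrow> p"
  shows "limsup (\<lambda>n. ereal (profit c (\<nu>s n) (ps n))) \<le> ereal (profit c \<nu> p)"
proof (rule ereal_le_epsilon2)
  fix \<epsilon> :: real
  assume "0 < \<epsilon>"
  have "c p \<le> p"
    using assms(3,8) by auto
  with eventually_margin_ge_near[OF assms(2,8) _ \<open>0 < \<epsilon>\<close>]
  have "eventually (\<lambda>k. limsup (\<lambda>n. ereal (profit c (\<nu>s n) (ps n)))
      \<le> ereal ((\<integral>v. ramp p k v * (p - c v) \<partial>\<nu>) + \<epsilon>)) sequentially"
    by (auto elim!: eventually_mono
        intro!: limsup_profit_le_ramp_integral[OF assms(1,2,4,6,9) \<open>0 < \<epsilon>\<close>])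
  moreover have "(\<lambda>k. ereal ((\<integral>v. ramp p k v * (p - c v) \<partial>\<nu>) + \<epsilon>))
      \<longlonglongrightarrow> ereal (profit c \<nu> p + \<epsilon>)"
    by (intro tendsto_intros ramp_integral_tendsto_profit[OF assms(5,1,2)])
  ultimately have "limsup (\<lambda>n. ereal (profit c (\<nu>s n) (ps n))) \<le> ereal (profit c \<nu> p + \<epsilon>)"
    by (intro tendsto_lowerbound) auto
  then show "limsup (\<lambda>n. ereal (profit c (\<nu>s n) (ps n))) \<le> ereal (profit c \<nu> p) + ereal \<epsilon>"
    by simp
qed

end
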